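(* Let $S$ be a finite subdirectly indecomposable semigroup such that $\llbracket S\rrbracket$ is join irreducible and $S$ is of semisimple type (left letter mapping, right letter mapping, or group mapping). Then $\operatorname{Excl}(S)$ is large, i.e. $\mathbf{1}\mathbin{ⓜ}\operatorname{Excl}(S)=\operatorname{Excl}(S)$.
   Context: All semigroups are finite. A pseudovariety is a class of finite semigroups closed under finite direct products, subsemigroups and homomorphic images; $\llbracket S\rrbracket$ is the pseudovariety generated by $S$; $\mathbf{1}$ is the trivial pseudovariety. A pseudovariety $\mathbf{V}$ is join irreducible if for every set $\mathscr{X}$ of pseudovarieties, $\mathbf{V}\subseteq\bigvee\mathscr{X}$ implies $\mathbf{V}\subseteq\mathbf{X}$ for some $\mathbf{X}\in\mathscr{X}$; $\operatorname{Excl}(S)$ is the class of finite semigroups $T$ with $S\notin\llbracket T\rrbracket$ (a pseudovariety when $\llbracket S\rrbracket$ is join irreducible). The Mal'cev product $\mathbf{V}\mathbin{ⓜ}\mathbf{W}$ is the pseudovariety generated by all finite semigroups $S$ admitting a homomorphism $\varphi\colon S\to T$ with $T\in\mathbf{W}$ and $e\varphi^{-1}\in\mathbf{V}$ for every idempotent $e\in T$. A semigroup $S$ is subdirectly indecomposable if whenever $S$ is a subsemigroup of $S_1\times S_2$ projecting onto both factors, one of the projections is an isomorphism. Such a finite $S$ has a unique $0$-minimal ideal $I$ (the minimal ideal if $S$ has no zero). $S$ is left letter mapping if $S$ acts faithfully on the right of the set of $\mathscr L$-classes of $I$; right letter mapping if $S$ acts faithfully on the left of the set of $\mathscr R$-classes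 of $I$; group mapping if $I$ contains a nontrivial maximal subgroup and $S$ acts faithfully on both the left and the right of $I$. *)

theory Defs
  imports Main "HOL-Library.Nat_Bijection"
begin

text \<open>Finite semigroups are represented concretely by a carrier set of natural
numbers together with a binary operation (only its values on the carrier matter).
Every finite semigroup is isomorphic to such a structure, and all classes below are
closed under isomorphism, so this loses no generality.\<close>

type_synonym sg = "nat set \<times> (nat \<Rightarrow> nat \<Rightarrow> nat)"

definition sgrp :: "'a set \<Rightarrow> ('a \<Rightarrow> 'a \<Rightarrow> 'a) \<Rightarrow> bool" where
  "sgrp A m \<longleftrightarrow> finite A \<and> A \<noteq> {} \<and> (\<forall>x\<in>A. \<forall>y\<in>A. m x y \<in> A) \<and>
     (\<forall>x\<in>A. \<forall>y\<in>A. \<forall>z\<in>A. m (m x y) z = m x (m y z))"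

definition is_sg :: "sg \<Rightarrow> bool" where
  "is_sg S \<longleftrightarrow> sgrp (fst S) (snd S)"

definition hom :: "'a set \<Rightarrow> ('a \<Rightarrow> 'a \<Rightarrow> 'a) \<Rightarrow> 'b set \<Rightarrow> ('b \<Rightarrow> 'b \<Rightarrow> 'b) \<Rightarrow> ('a \<Rightarrow> 'b) \<Rightarrow> bool" where
  "hom A m B n h \<longleftrightarrow> (\<forall>x\<in>A. h x \<in> B) \<and> (\<forall>x\<in>A. \<forall>y\<in>A. h (m x y) = n (h x) (h y))"

definition prod_sg :: "sg \<Rightarrow> sg \<Rightarrow> sg" where
  "prod_sg S T = (prod_encode ` (fst S \<times> fst T),
     (\<lambda>x y. prod_encode (snd S (fst (prod_decode x)) (fst (prod_decode y)),
                          snd T (snd (prod_decode x)) (snd (prod_decode y)))))"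

definition pseudovariety :: "sg set \<Rightarrow> bool" where
  "pseudovariety V \<longleftrightarrow>
     V \<noteq> {} \<and> (\<forall>S\<in>V. is_sg S) \<and>
     (\<forall>S\<in>V. \<forall>T\<in>V. prod_sg S T \<in> V) \<and>
     (\<forall>A m B. (A, m) \<in> V \<longrightarrow> B \<subseteq> A \<longrightarrow> sgrp B m \<longrightarrow> (B, m) \<in> V) \<and>
     (\<forall>A m B n h. (A, m) \<in> V \<longrightarrow> sgrp B n \<longrightarrow> hom A m B n h \<longrightarrow> h ` A = B \<longrightarrow> (B, n) \<in> V)"

definition pv_gen :: "sg set \<Rightarrow> sg set" where
  "pv_gen C = \<Inter>{V. pseudovariety V \<and> C \<subseteq> V}"

definition pv_gen1 :: "sg \<Rightarrow> sg set" where
  "pv_gen1 S = pv_gen {S}"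

definition pv_join :: "sg set set \<Rightarrow> sg set" where
  "pv_join \<X> = pv_gen (\<Union>\<X>)"

definition join_irreducible :: "sg set \<Rightarrow> bool" where
  "join_irreducible V \<longleftrightarrow>
     (\<forall>\<X>. (\<forall>X\<in>\<X>. pseudovariety X) \<longrightarrow> V \<subseteq> pv_join \<X> \<longrightarrow> (\<exists>X\<in>\<X>. V \<subseteq> X))"

definition triv_pv :: "sg set" where
  "triv_pv = {S. is_sg S \<and> card (fst S) = 1}"

definition Excl :: "sg \<Rightarrow> sg set" where
  "Excl S = {T. is_sg T \<and> S \<notin> pv_gen1 T}"

text \<open>Mal'cev product: generated by all S admitting a homomorphism into some T in W such
that the preimage of each idempotent (when nonempty, i.e. a subsemigroup) lies in V.\<close>
definition malcev :: "sg set \<Rightarrow> sg set \<Rightarrow> sg set" where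
  "malcev V W = pv_gen {(A, m). sgrp A m \<and>
      (\<exists>B n \<phi>. (B, n) \<in> W \<and> hom A m B n \<phi> \<and>
         (\<forall>e\<in>B. n e e = e \<longrightarrow> {s\<in>A. \<phi> s = e} \<noteq> {} \<longrightarrow> ({s\<in>A. \<phi> s = e}, m) \<in> V))}"

definition subdirectly_indecomposable :: "nat set \<Rightarrow> (nat \<Rightarrow> nat \<Rightarrow> nat) \<Rightarrow> bool" where
  "subdirectly_indecomposable A m \<longleftrightarrow>
     (\<forall>B1 n1 B2 n2 (f1::nat\<Rightarrow>nat) (f2::nat\<Rightarrow>nat).
        sgrp B1 n1 \<longrightarrow> sgrp B2 n2 \<longrightarrow> hom A m B1 n1 f1 \<longrightarrow> hom A m B2 n2 f2 \<longrightarrow>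
        f1 ` A = B1 \<longrightarrow> f2 ` A = B2 \<longrightarrow> inj_on (\<lambda>x. (f1 x, f2 x)) A \<longrightarrow>
        inj_on f1 A \<or> inj_on f2 A)"

definition is_ideal :: "'a set \<Rightarrow> ('a \<Rightarrow> 'a \<Rightarrow> 'a) \<Rightarrow> 'a set \<Rightarrow> bool" where
  "is_ideal A m I \<longleftrightarrow> I \<noteq> {} \<and> I \<subseteq> A \<and> (\<forall>s\<in>A. \<forall>x\<in>I. m s x \<in> I \<and> m x s \<in> I)"

definition is_zero :: "'a set \<Rightarrow> ('a \<Rightarrow> 'a \<Rightarrow> 'a) \<Rightarrow> 'a \<Rightarrow> bool" where
  "is_zero A m z \<longleftrightarrow> z \<in> A \<and> (\<forall>x\<in>A. m z x = z \<and> m x z = z)"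

definition minimal_ideal :: "'a set \<Rightarrow> ('a \<Rightarrow> 'a \<Rightarrow> 'a) \<Rightarrow> 'a set \<Rightarrow> bool" where
  "minimal_ideal A m I \<longleftrightarrow> is_ideal A m I \<and> (\<forall>J. is_ideal A m J \<longrightarrow> J \<subseteq> I \<longrightarrow> J = I)"

definition zero_minimal_ideal :: "'a set \<Rightarrow> ('a \<Rightarrow> 'a \<Rightarrow> 'a) \<Rightarrow> 'a \<Rightarrow> 'a set \<Rightarrow> bool" where
  "zero_minimal_ideal A m z I \<longleftrightarrow> is_ideal A m I \<and> I \<noteq> {z} \<and>
     (\<forall>J. is_ideal A m J \<longrightarrow> J \<subseteq> I \<longrightarrow> J = {z} \<or> J = I)"

definition distinguished_ideal :: "'a set \<Rightarrow> ('a \<Rightarrow> 'a \<Rightarrow> 'a) \<Rightarrow> 'a set \<Rightarrow> bool" where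
  "distinguished_ideal A m I \<longleftrightarrow>
     (if \<exists>z. is_zero A m z then (\<exists>z. is_zero A m z \<and> zero_minimal_ideal A m z I)
      else minimal_ideal A m I)"

text \<open>Green's relations (S^1 x = S^1 y, x S^1 = y S^1, and H = L meet R).\<close>
definition Lrel :: "'a set \<Rightarrow> ('a \<Rightarrow> 'a \<Rightarrow> 'a) \<Rightarrow> 'a \<Rightarrow> 'a \<Rightarrow> bool" where
  "Lrel A m x y \<longleftrightarrow> x \<in> A \<and> y \<in> A \<and>
     (x = y \<or> (\<exists>u\<in>A. x = m u y)) \<and> (y = x \<or> (\<exists>v\<in>A. y = m v x))"

definition Rrel :: "'a set \<Rightarrow> ('a \<Rightarrow> 'a \<Rightarrow> 'a) \<Rightarrow> 'a \<Rightarrow> 'a \<Rightarrow> bool" where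
  "Rrel A m x y \<longleftrightarrow> x \<in> A \<and> y \<in> A \<and>
     (x = y \<or> (\<exists>u\<in>A. x = m y u)) \<and> (y = x \<or> (\<exists>v\<in>A. y = m x v))"

text \<open>S acts faithfully on the right of the set of L-classes of I (the class of x
is sent by s to the class of xs).\<close>
definition left_letter_mapping :: "nat set \<Rightarrow> (nat \<Rightarrow> nat \<Rightarrow> nat) \<Rightarrow> bool" where
  "left_letter_mapping A m \<longleftrightarrow> (\<exists>I. distinguished_ideal A m I \<and>
     (\<forall>s\<in>A. \<forall>t\<in>A. (\<forall>x\<in>I. Lrel A m (m x s) (m x t)) \<longrightarrow> s = t))"

definition right_letter_mapping :: "nat set \<Rightarrow> (nat \<Rightarrow> nat \<Rightarrow> nat) \<Rightarrow> bool" where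
  "right_letter_mapping A m \<longleftrightarrow> (\<exists>I. distinguished_ideal A m I \<and>
     (\<forall>s\<in>A. \<forall>t\<in>A. (\<forall>x\<in>I. Rrel A m (m s x) (m t x)) \<longrightarrow> s = t))"

definition is_subgroup :: "'a set \<Rightarrow> ('a \<Rightarrow> 'a \<Rightarrow> 'a) \<Rightarrow> 'a set \<Rightarrow> bool" where
  "is_subgroup A m G \<longleftrightarrow> G \<subseteq> A \<and> G \<noteq> {} \<and> (\<forall>x\<in>G. \<forall>y\<in>G. m x y \<in> G) \<and>
     (\<exists>e\<in>G. \<forall>g\<in>G. m e g = g \<and> m g e = g \<and> (\<exists>h\<in>G. m g h = e \<and> m h g = e))"

definition maximal_subgroup :: "'a set \<Rightarrow> ('a \<Rightarrow> 'a \<Rightarrow> 'a) \<Rightarrow> 'a set \<Rightarrow> bool" where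
  "maximal_subgroup A m G \<longleftrightarrow> is_subgroup A m G \<and>
     (\<forall>G'. is_subgroup A m G' \<longrightarrow> G \<subseteq> G' \<longrightarrow> G' = G)"

definition group_mapping :: "nat set \<Rightarrow> (nat \<Rightarrow> nat \<Rightarrow> nat) \<Rightarrow> bool" where
  "group_mapping A m \<longleftrightarrow> (\<exists>I. distinguished_ideal A m I \<and>
     (\<exists>G. maximal_subgroup A m G \<and> G \<subseteq> I \<and> card G > 1) \<and>
     (\<forall>s\<in>A. \<forall>t\<in>A. (\<forall>x\<in>I. m s x = m t x) \<longrightarrow> s = t) \<and>
     (\<forall>s\<in>A. \<forall>t\<in>A. (\<forall>x\<in>I. m x s = m x t) \<longrightarrow> s = t))"

definition semisimple_type :: "nat set \<Rightarrow> (nat \<Rightarrow> nat \<Rightarrow> nat) \<Rightarrow> bool" where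
  "semisimple_type A m \<longleftrightarrow> left_letter_mapping A m \<or> right_letter_mapping A m \<or> group_mapping A m"

end

theory Submission
  imports Defs
begin

text \<open>Let \<open>W = Excl S\<close>; join irreducibility of \<open>\<lbrakk>S\<rbrakk>\<close> makes \<open>W\<close> a pseudovariety, and
  \<open>W \<subseteq> \<one> \<^bold>m W\<close> is clear. The generators of \<open>\<one> \<^bold>m W\<close> lie in the class of quotients
  \<open>\<psi> : R \<rightarrow> X\<close> of semigroups \<open>R\<close> admitting a morphism \<open>\<phi> : R \<rightarrow> B \<in> W\<close> that is injective on
  preimages of idempotents, and this class is a pseudovariety. Suppose \<open>S\<close> were such a quotient.
  If \<open>\<phi> r = \<phi> r'\<close>, then every idempotent of the form \<open>x (\<psi> r)\<close> absorbs \<open>x (\<psi> r')\<close>, and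
  dually. The distinguished ideal \<open>I\<close> of \<open>S\<close> contains a nonzero idempotent, so its nonzero elements
  are regular, and together with stability this yields \<open>x (\<psi> r) = x (\<psi> r')\<close> for all \<open>x \<in> I\<close>,
  and dually. Faithfulness of the action on \<open>I\<close>, in each of the three semisimple types, then gives
  \<open>\<psi> r = \<psi> r'\<close>. Hence \<open>\<psi>\<close> factors through the subsemigroup \<open>\<phi> R\<close> of \<open>B\<close>, so \<open>S \<in> W\<close>,
  which is absurd; therefore \<open>\<one> \<^bold>m W \<subseteq> W\<close>.\<close>

section \<open>Powers and stability in finite semigroups\<close>

text \<open>\<open>spow m a k\<close> is \<open>a\<^sup>k\<^sup>+\<^sup>1\<close>: a semigroup has no unit, so powers start at exponent one.\<close>

fun spow :: "('a \<Rightarrow> 'a \<Rightarrow> 'a) \<Rightarrow> 'a \<Rightarrow> nat \<Rightarrow> 'a" where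
  "spow m a 0 = a"
| "spow m a (Suc k) = m (spow m a k) a"

lemma sgrp_dual: "sgrp A m \<Longrightarrow> sgrp A (\<lambda>x y. m y x)"
  unfolding sgrp_def by simp

lemma hom_dual: "hom A m B n h \<Longrightarrow> hom A (\<lambda>x y. m y x) B (\<lambda>x y. n y x) h"
  unfolding hom_def by simp

locale finite_semigroup =
  fixes A :: "'a set" and m :: "'a \<Rightarrow> 'a \<Rightarrow> 'a"
  assumes sgrp: "sgrp A m"
begin

lemma finite: "finite A"
  and closed [simp, intro]: "x \<in> A \<Longrightarrow> y \<in> A \<Longrightarrow> m x y \<in> A"
  and assoc: "x \<in> A \<Longrightarrow> y \<in> A \<Longrightarrow> z \<in> A \<Longrightarrow> m (m x y) z = m x (m y z)"
  using sgrp unfolding sgrp_def by auto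

lemma spow_closed [simp, intro]: "a \<in> A \<Longrightarrow> spow m a k \<in> A"
  by (induction k) auto

lemma spow_mult: "a \<in> A \<Longrightarrow> m (spow m a i) (spow m a j) = spow m a (Suc (i + j))"
  by (induction j) (simp_all add: assoc[symmetric])

lemma spow_Suc_left: "a \<in> A \<Longrightarrow> spow m a (Suc k) = m a (spow m a k)"
  using spow_mult[of a 0 k] by simp

lemma spow_idempotent: "m e e = e \<Longrightarrow> spow m e k = e"
  by (induction k) auto

lemma spow_eventually_periodic:
  assumes "a \<in> A"
  obtains i d where "d > 0" "\<And>n c. i \<le> n \<Longrightarrow> spow m a (n + c * d) = spow m a n"
proof -
  have "range (spow m a) \<subseteq> A"
    using assms by auto
  then have "\<not> inj (spow m a)"
    using finite_subset[OF _ finite] finite_imageD infinite_UNIV_nat by blast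
  then obtain x y where "x \<noteq> y" "spow m a x = spow m a y"
    unfolding inj_def by blast
  then obtain i j where ij: "i < j" "spow m a i = spow m a j"
    by (cases x y rule: linorder_cases) auto
  define d where "d = j - i"
  have d: "d > 0" "spow m a (i + d) = spow m a i"
    using ij by (simp_all add: d_def)
  have period: "spow m a (n + d) = spow m a n" if "i \<le> n" for n
    using that by (induction n rule: dec_induct) (use d in simp_all)
  have "spow m a (n + c * d) = spow m a n" if "i \<le> n" for n c
  proof (induction c)
    case (Suc c)
    have "spow m a (n + Suc c * d) = spow m a ((n + c * d) + d)"
      by (simp add: algebra_simps)
    also have "\<dots> = spow m a n"
      using period[of "n + c * d"] Suc that by simp
    finally show ?case .
  qed simp
  with d(1) show thesis
    by (rule that)
qed

lemma idempotent_spow: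
  assumes "a \<in> A"
  obtains k where "m (spow m a k) (spow m a k) = spow m a k"
proof -
  obtain i d where d: "d > 0" and period: "\<And>n c. i \<le> n \<Longrightarrow> spow m a (n + c * d) = spow m a n"
    using spow_eventually_periodic[OF assms] by metis
  define N where "N = (i + 1) * d"
  define k where "k = N - 1"
  have "i + 1 \<le> N"
    using d mult_le_mono2[of 1 d "i + 1"] by (simp add: N_def)
  then have k: "i \<le> k" "Suc (k + k) = k + (i + 1) * d"
    unfolding k_def N_def[symmetric] by linarith+
  have "m (spow m a k) (spow m a k) = spow m a (k + (i + 1) * d)"
    unfolding spow_mult[OF assms] k(2) ..
  also have "\<dots> = spow m a k"
    using k(1) by (rule period)
  finally show thesis
    by (rule that)
qed

lemma stable_left:
  assumes a: "a \<in> A" and b: "b \<in> A" and x: "x \<in> A" and hx: "x = m (m a x) b"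
  shows "\<exists>z\<in>A. x = m z (m a x)"
proof -
  have iter: "x = m (m (spow m a k) x) (spow m b k)" for k
  proof (induction k)
    case (Suc k)
    have "x = m (m a (m (m (spow m a k) x) (spow m b k))) b"
      by (simp only: Suc.IH[symmetric]) (rule hx)
    also have "\<dots> = m (m (spow m a (Suc k)) x) (spow m b (Suc k))"
      using a b x by (simp only: spow_Suc_left[OF a] spow.simps(2)[of m b]) (simp add: assoc)
    finally show ?case .
  qed (use hx in simp)
  obtain k where k: "m (spow m b k) (spow m b k) = spow m b k"
    using idempotent_spow b by metis
  have "m x (spow m b k) = m (m (spow m a k) x) (m (spow m b k) (spow m b k))"
    using a b x by (subst (1) iter[of k]) (simp add: assoc)
  then have "m x (spow m b k) = x"
    using k iter[of k] by simp
  then have "x = m (spow m a k) x"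
    using iter[of k] a b x by (simp add: assoc)
  then have "x = m (m (spow m a k) (spow m a k)) x"
    using a x by (simp add: assoc)
  also have "\<dots> = m (spow m a (k + k)) (m a x)"
    using a x by (simp add: spow_mult assoc)
  finally show ?thesis
    using a by blast
qed

end

section \<open>The distinguished ideal\<close>

text \<open>The duality equations below are only used instantiated: as simp rules they loop, since
  any \<open>m\<close> unifies with \<open>\<lambda>x y. ?m y x\<close>.\<close>

lemma is_zero_dual: "is_zero A (\<lambda>x y. m y x) z \<longleftrightarrow> is_zero A m z"
  unfolding is_zero_def by blast

lemma is_ideal_dual: "is_ideal A (\<lambda>x y. m y x) I \<longleftrightarrow> is_ideal A m I"
  unfolding is_ideal_def by blast

lemma distinguished_ideal_dual:
  "distinguished_ideal A (\<lambda>x y. m y x) I \<longleftrightarrow> distinguished_ideal A m I"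
  unfolding distinguished_ideal_def minimal_ideal_def zero_minimal_ideal_def
    is_ideal_dual[of A m] is_zero_dual[of A m] ..

lemma is_zero_unique:
  assumes "is_zero A m z" "is_zero A m z'"
  shows "z = z'"
proof -
  have "m z z' = z" "m z z' = z'"
    using assms unfolding is_zero_def by auto
  then show ?thesis
    by simp
qed

lemma is_zero_absorbs: "is_zero A m z \<Longrightarrow> x \<in> A \<Longrightarrow> m x z = z \<and> m z x = z"
  unfolding is_zero_def by auto

definition principal_ideal :: "'a set \<Rightarrow> ('a \<Rightarrow> 'a \<Rightarrow> 'a) \<Rightarrow> 'a \<Rightarrow> 'a set" where
  "principal_ideal A m a = {x \<in> A. x = a \<or> (\<exists>u\<in>A. x = m u a) \<or> (\<exists>v\<in>A. x = m a v) \<or>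
     (\<exists>u\<in>A. \<exists>v\<in>A. x = m (m u a) v)}"

lemma (in finite_semigroup) is_ideal_principal_ideal:
  assumes a: "a \<in> A"
  shows "is_ideal A m (principal_ideal A m a)"
proof -
  let ?J = "principal_ideal A m a"
  have J_intros: "a \<in> ?J" "\<And>u. u \<in> A \<Longrightarrow> m u a \<in> ?J" "\<And>v. v \<in> A \<Longrightarrow> m a v \<in> ?J"
      "\<And>u v. u \<in> A \<Longrightarrow> v \<in> A \<Longrightarrow> m (m u a) v \<in> ?J"
    using a unfolding principal_ideal_def by auto
  have J_closed: "m s x \<in> ?J \<and> m x s \<in> ?J" if s: "s \<in> A" and "x \<in> ?J" for s x
  proof -
    from \<open>x \<in> ?J\<close> consider "x = a" | u where "u \<in> A" "x = m u a" | v where "v \<in> A" "x = m a v"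
      | u v where "u \<in> A" "v \<in> A" "x = m (m u a) v"
      unfolding principal_ideal_def by blast
    then show ?thesis
    proof cases
      case 1
      then show ?thesis using s J_intros by simp
    next
      case (2 u)
      then show ?thesis
        using s a J_intros(2)[of "m s u"] J_intros(4)[of u s] by (simp add: assoc)
    next
      case (3 v)
      then show ?thesis
        using s a J_intros(4)[of s v] J_intros(3)[of "m v s"] by (simp add: assoc)
    next
      case (4 u v)
      then show ?thesis
        using s a J_intros(4)[of "m s u" v] J_intros(4)[of u "m v s"] by (simp add: assoc)
    qed
  qed
  show ?thesis
    unfolding is_ideal_def
  proof (intro conjI ballI)
    show "?J \<noteq> {}"
      using J_intros(1) by blast
    show "?J \<subseteq> A"
      unfolding principal_ideal_def by blast
  qed (use J_closed in blast)+
qed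

locale distinguished = finite_semigroup +
  fixes I
  assumes distinguished: "distinguished_ideal A m I"
begin

lemma ideal: "is_ideal A m I"
  using distinguished
  unfolding distinguished_ideal_def zero_minimal_ideal_def minimal_ideal_def
  by (auto split: if_splits)

lemma I_subset [simp, intro]: "x \<in> I \<Longrightarrow> x \<in> A"
  and mult_I [simp, intro]: "x \<in> I \<Longrightarrow> s \<in> A \<Longrightarrow> m x s \<in> I"
  and I_mult [simp, intro]: "x \<in> I \<Longrightarrow> s \<in> A \<Longrightarrow> m s x \<in> I"
  using ideal unfolding is_ideal_def by auto

lemma dual: "distinguished A (\<lambda>x y. m y x) I"
proof unfold_locales
  show "sgrp A (\<lambda>x y. m y x)"
    using sgrp by (rule sgrp_dual)
  show "distinguished_ideal A (\<lambda>x y. m y x) I"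
    unfolding distinguished_ideal_dual[of A m] by (rule distinguished)
qed

lemma ideal_eq_I:
  assumes "is_ideal A m J" "J \<subseteq> I" "a \<in> J" "\<not> is_zero A m a"
  shows "J = I"
proof (cases "\<exists>z. is_zero A m z")
  case True
  then obtain z where z: "is_zero A m z" "zero_minimal_ideal A m z I"
    using distinguished unfolding distinguished_ideal_def by auto
  then have "J = {z} \<or> J = I"
    using assms unfolding zero_minimal_ideal_def by blast
  moreover have "J \<noteq> {z}"
    using assms z by auto
  ultimately show ?thesis
    by blast
next
  case False
  then have "minimal_ideal A m I"
    using distinguished unfolding distinguished_ideal_def by simp
  with assms show ?thesis
    unfolding minimal_ideal_def by blast
qed

lemma nonzero_in_I: obtains a where "a \<in> I" "\<not> is_zero A m a"
proof (cases "\<exists>z. is_zero A m z")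
  case True
  then obtain z where z: "is_zero A m z" "zero_minimal_ideal A m z I"
    using distinguished unfolding distinguished_ideal_def by auto
  then have "I \<noteq> {z}" "I \<noteq> {}"
    using ideal unfolding zero_minimal_ideal_def is_ideal_def by simp_all
  then obtain a where a: "a \<in> I" "a \<noteq> z"
    by blast
  then have "\<not> is_zero A m a"
    using is_zero_unique[OF z(1)] by blast
  with a(1) show thesis
    by (rule that)
next
  case False
  obtain a where "a \<in> I"
    using ideal unfolding is_ideal_def by blast
  with False show thesis
    using that by blast
qed

lemma principal_ideal_eq_I:
  assumes a: "a \<in> I" "\<not> is_zero A m a"
  shows "principal_ideal A m a = I"
proof (rule ideal_eq_I)
  show "is_ideal A m (principal_ideal A m a)"
    using a(1) by (intro is_ideal_principal_ideal) auto
  show "principal_ideal A m a \<subseteq> I"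
    unfolding principal_ideal_def using a(1) by auto
  show "a \<in> principal_ideal A m a"
    unfolding principal_ideal_def using a(1) by auto
qed (rule a(2))

lemma left_stable:
  assumes x: "x \<in> I" "\<not> is_zero A m x" and s: "s \<in> A" and sx: "\<not> is_zero A m (m s x)"
  shows "\<exists>z\<in>A. x = m z (m s x)"
proof -
  have xA: "x \<in> A"
    using x by auto
  have "x \<in> principal_ideal A m (m s x)"
    using principal_ideal_eq_I[OF _ sx] x s by simp
  then consider "x = m s x" | "\<exists>u\<in>A. x = m u (m s x)" | v where "v \<in> A" "x = m (m s x) v"
    | u v where "u \<in> A" "v \<in> A" "x = m (m u (m s x)) v"
    unfolding principal_ideal_def by blast
  then show ?thesis
  proof cases
    case 1
    then show ?thesis using s by auto
  next
    case 2
    then show ?thesis .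
  next
    case (3 v)
    then show ?thesis
      using stable_left[OF s _ xA] by blast
  next
    case (4 u v)
    then have "x = m (m (m u s) x) v"
      using s xA by (simp add: assoc)
    then obtain z where "z \<in> A" "x = m z (m (m u s) x)"
      using stable_left[of "m u s" v x] 4 s xA by auto
    then show ?thesis
      using 4 s xA by (intro bexI[of _ "m z u"]) (auto simp: assoc)
  qed
qed

lemma right_stable:
  assumes "x \<in> I" "\<not> is_zero A m x" "s \<in> A" "\<not> is_zero A m (m x s)"
  shows "\<exists>z\<in>A. x = m (m x s) z"
proof -
  interpret dual: distinguished A "\<lambda>x y. m y x" I
    by (rule dual)
  show ?thesis
    using dual.left_stable[of x s] assms by (simp add: is_zero_dual[of A m])
qed

lemma nonzero_idempotent_of_product:
  assumes b: "b \<in> I" and c: "c \<in> I" and bc: "\<not> is_zero A m (m b c)"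
  obtains f where "f \<in> I" "m f f = f" "\<not> is_zero A m f"
proof -
  have bA: "b \<in> A" and cA: "c \<in> A"
    using b c by auto
  have "\<not> is_zero A m b"
    using bc cA is_zero_absorbs by metis
  then obtain z where z: "z \<in> A" "b = m (m b c) z"
    using right_stable[OF b _ cA bc] by blast
  define y where "y = m c z"
  have yI: "y \<in> I"
    unfolding y_def using c z by auto
  have b_y: "m b y = b"
    using z bA cA by (simp add: y_def assoc)
  have b_spow: "m b (spow m y k) = b" for k
  proof (induction k)
    case (Suc k)
    have "m b (spow m y (Suc k)) = m (m b (spow m y k)) y"
      using yI bA by (simp add: assoc)
    then show ?case
      using Suc b_y by simp
  qed (use b_y in simp)
  obtain k where k: "m (spow m y k) (spow m y k) = spow m y k"
    using idempotent_spow yI by (metis I_subset)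
  have "\<not> is_zero A m (spow m y k)"
    using b_spow[of k] \<open>\<not> is_zero A m b\<close> bA is_zero_absorbs by metis
  moreover have "spow m y k \<in> I"
    using yI by (induction k) auto
  ultimately show thesis
    using k that by blast
qed

lemma regular_of_nonzero_idempotent:
  assumes f: "f \<in> I" "m f f = f" "\<not> is_zero A m f" and a: "a \<in> I" "\<not> is_zero A m a"
  shows "\<exists>a'\<in>A. m (m a a') a = a"
proof -
  have fA: "f \<in> A" and aA: "a \<in> A"
    using f a by auto
  have "a \<in> principal_ideal A m f"
    using principal_ideal_eq_I[OF f(1) f(3)] a(1) by simp
  then consider "a = f" | u where "u \<in> A" "a = m u f" | v where "v \<in> A" "a = m f v"
    | u v where "u \<in> A" "v \<in> A" "a = m (m u f) v"
    unfolding principal_ideal_def by blast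
  then obtain u v where uv: "u \<in> A" "v \<in> A" "a = m (m u f) v"
  proof cases
    case 1
    then have "a = m (m f f) f"
      using f(2) by simp
    with fA show thesis
      using that by blast
  next
    case (2 u)
    then have "a = m (m u f) f"
      using f(2) fA by (simp add: assoc)
    with fA \<open>u \<in> A\<close> show thesis
      using that by blast
  next
    case (3 v)
    then have "a = m (m f f) v"
      using f(2) by simp
    with fA \<open>v \<in> A\<close> show thesis
      using that by blast
  next
    case 4
    then show thesis
      using that by blast
  qed
  have "\<not> is_zero A m (m u f)"
    using uv a(2) is_zero_absorbs by metis
  then obtain z1 where z1: "z1 \<in> A" "f = m z1 (m u f)"
    using left_stable[OF f(1) f(3) uv(1)] by blast
  have "\<not> is_zero A m (m f v)"
    using uv fA a(2) is_zero_absorbs by (metis assoc closed)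
  then obtain z2 where z2: "z2 \<in> A" "f = m (m f v) z2"
    using right_stable[OF f(1) f(3) uv(2)] by blast
  have "m (m a (m z2 z1)) a = m (m u (m (m (m f v) z2) (m z1 (m u f)))) v"
    unfolding uv(3) using uv z1(1) z2(1) fA by (simp add: assoc)
  also have "\<dots> = a"
    unfolding z1(2)[symmetric] z2(2)[symmetric] using f(2) uv fA by (simp add: assoc)
  finally show ?thesis
    using z1 z2 by blast
qed

end

section \<open>Semigroups of semisimple type\<close>

definition left_idem_compatible :: "'a set \<Rightarrow> ('a \<Rightarrow> 'a \<Rightarrow> 'a) \<Rightarrow> 'a \<Rightarrow> 'a \<Rightarrow> bool" where
  "left_idem_compatible A m s t \<longleftrightarrow>
     (\<forall>x\<in>A. m (m x s) (m x s) = m x s \<longrightarrow> m (m x s) (m x t) = m x s)"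

definition idem_compatible :: "'a set \<Rightarrow> ('a \<Rightarrow> 'a \<Rightarrow> 'a) \<Rightarrow> 'a \<Rightarrow> 'a \<Rightarrow> bool" where
  "idem_compatible A m s t \<longleftrightarrow>
     left_idem_compatible A m s t \<and> left_idem_compatible A (\<lambda>x y. m y x) s t"

locale regular_distinguished = distinguished +
  assumes nonzero_idempotent: "\<exists>f\<in>I. m f f = f \<and> \<not> is_zero A m f"
begin

lemma regular: "a \<in> I \<Longrightarrow> \<not> is_zero A m a \<Longrightarrow> \<exists>a'\<in>A. m (m a a') a = a"
  using nonzero_idempotent regular_of_nonzero_idempotent by blast

text \<open>With \<open>w = x s\<close> and \<open>w w' w = w\<close>, the idempotent \<open>w' w = (w' x) s\<close> absorbs \<open>(w' x) t\<close>;
  since \<open>x\<close> and \<open>w\<close> are \<open>\<R>\<close>-equivalent, \<open>w w'\<close> fixes \<open>x\<close>, whence \<open>x t = w w' x t = w\<close>.\<close>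

lemma left_idem_compatible_mult_eq:
  assumes st: "left_idem_compatible A m s t" "s \<in> A" "t \<in> A"
    and x: "x \<in> I" and xs: "\<not> is_zero A m (m x s)"
  shows "m x t = m x s"
proof -
  define w where "w = m x s"
  have xA: "x \<in> A" and wI: "w \<in> I"
    using x st unfolding w_def by auto
  then have wA: "w \<in> A"
    by auto
  obtain w' where w': "w' \<in> A" "m (m w w') w = w"
    using regular[OF wI] xs unfolding w_def by blast
  have "\<not> is_zero A m x"
    using xs st is_zero_absorbs by metis
  then obtain z where z: "z \<in> A" "x = m w z"
    using right_stable[OF x _ st(2) xs] unfolding w_def by blast
  define y where "y = m w' x"
  have yA: "y \<in> A"
    unfolding y_def using w' xA by auto
  have ys: "m y s = m w' w"
    unfolding y_def w_def using w' xA st by (simp add: assoc)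
  have "m (m w' w) (m w' w) = m w' (m (m w w') w)"
    using w' wA by (simp add: assoc)
  then have "m (m y s) (m y s) = m y s"
    unfolding ys using w' by simp
  then have absorb: "m (m w' w) (m y t) = m w' w"
    using st(1) yA ys unfolding left_idem_compatible_def by metis
  have "m w (m y t) = m (m (m w w') w) (m y t)"
    using w' by simp
  also have "\<dots> = m (m w w') w"
    using absorb w'(1) wA yA st by (simp add: assoc)
  finally have w_yt: "m w (m y t) = w"
    using w' by simp
  have "m (m w w') x = x"
    using z w' wA by (simp add: assoc[symmetric])
  then have "m x t = m (m (m w w') x) t"
    by simp
  also have "\<dots> = m w (m y t)"
    unfolding y_def using w' wA xA st by (simp add: assoc)
  finally show ?thesis
    using w_yt unfolding w_def by simp
qed

lemma left_idem_compatible_eq_on_I: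
  assumes "left_idem_compatible A m s t" "left_idem_compatible A m t s" "s \<in> A" "t \<in> A"
    and x: "x \<in> I"
  shows "m x s = m x t"
proof (cases "is_zero A m (m x s) \<and> is_zero A m (m x t)")
  case True
  then show ?thesis
    by (elim conjE) (rule is_zero_unique)
next
  case False
  then consider "\<not> is_zero A m (m x s)" | "\<not> is_zero A m (m x t)"
    by blast
  then show ?thesis
  proof cases
    case 1
    then show ?thesis
      using left_idem_compatible_mult_eq[of s t x] assms by simp
  next
    case 2
    then show ?thesis
      using left_idem_compatible_mult_eq[of t s x] assms by simp
  qed
qed

end

lemma Lrel_refl: "x \<in> A \<Longrightarrow> Lrel A m x x"
  unfolding Lrel_def by simp

lemma right_letter_mapping_dual:
  "right_letter_mapping A m \<Longrightarrow> left_letter_mapping A (\<lambda>x y. m y x)"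
  unfolding right_letter_mapping_def left_letter_mapping_def Lrel_def Rrel_def
    distinguished_ideal_dual[of A m] by simp

lemma left_letter_mapping_idem_compatible_eq:
  fixes A :: "nat set"
  assumes sg: "sgrp A m" and llm: "left_letter_mapping A m" and st: "s \<in> A" "t \<in> A"
    and compatible: "left_idem_compatible A m s t" "left_idem_compatible A m t s"
  shows "s = t"
proof -
  obtain I where I: "distinguished_ideal A m I"
    and faithful: "\<forall>s\<in>A. \<forall>t\<in>A. (\<forall>x\<in>I. Lrel A m (m x s) (m x t)) \<longrightarrow> s = t"
    using llm unfolding left_letter_mapping_def by blast
  interpret distinguished A m I
    using sg I by unfold_locales
  have "\<exists>b\<in>I. \<exists>c\<in>I. \<not> is_zero A m (m b c)"
  proof (rule ccontr)
    assume null: "\<not> ?thesis"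
    obtain a where a: "a \<in> I" "\<not> is_zero A m a"
      using nonzero_in_I by blast
    have "Lrel A m (m x a) (m x (m a a))" if x: "x \<in> I" for x
    proof -
      have "is_zero A m (m x a)" "is_zero A m (m x (m a a))"
        using null x a(1) by auto
      then have "m x a = m x (m a a)"
        by (rule is_zero_unique)
      then show ?thesis
        using Lrel_refl[of "m x a" A m] x a(1) by simp
    qed
    then have "a = m a a"
      using faithful[rule_format, of a "m a a"] a(1) by auto
    moreover have "is_zero A m (m a a)"
      using null a(1) by blast
    ultimately show False
      using a(2) by metis
  qed
  then interpret regular_distinguished A m I
    using nonzero_idempotent_of_product by unfold_locales blast
  have "Lrel A m (m x s) (m x t)" if "x \<in> I" for x
    using left_idem_compatible_eq_on_I[OF compatible st that] Lrel_refl[of "m x s" A m] that st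
    by simp
  then show ?thesis
    using faithful[rule_format, OF st] by blast
qed

lemma group_mapping_idem_compatible_eq:
  fixes A :: "nat set"
  assumes sg: "sgrp A m" and gm: "group_mapping A m" and st: "s \<in> A" "t \<in> A"
    and compatible: "left_idem_compatible A m s t" "left_idem_compatible A m t s"
  shows "s = t"
proof -
  obtain I G where I: "distinguished_ideal A m I"
    and G: "is_subgroup A m G" "G \<subseteq> I" "card G > 1"
    and faithful: "\<forall>s\<in>A. \<forall>t\<in>A. (\<forall>x\<in>I. m x s = m x t) \<longrightarrow> s = t"
    using gm unfolding group_mapping_def maximal_subgroup_def by blast
  interpret distinguished A m I
    using sg I by unfold_locales
  obtain e where e: "e \<in> G" "\<forall>g\<in>G. m e g = g \<and> m g e = g"
    using G(1) unfolding is_subgroup_def by blast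
  have "\<not> is_zero A m e"
  proof
    assume zero: "is_zero A m e"
    have "G \<subseteq> {e}"
    proof
      fix g assume g: "g \<in> G"
      then have "g \<in> A"
        using G(2) by auto
      then have "g = m e g" "m e g = e"
        using e g is_zero_absorbs[OF zero] by auto
      then show "g \<in> {e}"
        by simp
    qed
    then have "card G \<le> 1"
      using card_mono[of "{e}" G] by simp
    then show False
      using G(3) by simp
  qed
  moreover have "m e e = e" "e \<in> I"
    using e G(2) by auto
  ultimately interpret regular_distinguished A m I
    by unfold_locales blast
  have "\<forall>x\<in>I. m x s = m x t"
    using left_idem_compatible_eq_on_I[OF compatible st] by blast
  then show ?thesis
    using faithful[rule_format, OF st] by blast
qed

lemma semisimple_type_idem_compatible_eq:
  fixes A :: "nat set"
  assumes sg: "sgrp A m" and "semisimple_type A m" and st: "s \<in> A" "t \<in> A"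
    and "idem_compatible A m s t" "idem_compatible A m t s"
  shows "s = t"
  using assms(2) unfolding semisimple_type_def
proof (elim disjE)
  assume "right_letter_mapping A m"
  then show ?thesis
    using left_letter_mapping_idem_compatible_eq[OF sgrp_dual[OF sg] right_letter_mapping_dual st]
      assms(5,6) unfolding idem_compatible_def by blast
qed (use left_letter_mapping_idem_compatible_eq group_mapping_idem_compatible_eq assms
    in \<open>auto simp: idem_compatible_def\<close>)

section \<open>Morphisms injective on preimages of idempotents\<close>

definition idem_injective :: "'r set \<Rightarrow> ('b \<Rightarrow> 'b \<Rightarrow> 'b) \<Rightarrow> ('r \<Rightarrow> 'b) \<Rightarrow> bool" where
  "idem_injective R n \<phi> \<longleftrightarrow> (\<forall>x\<in>R. \<forall>y\<in>R. \<phi> x = \<phi> y \<longrightarrow> n (\<phi> x) (\<phi> x) = \<phi> x \<longrightarrow> x = y)"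

lemma hom_spow:
  assumes "hom R p A m \<psi>" "sgrp R p" "a \<in> R"
  shows "\<psi> (spow p a k) = spow m (\<psi> a) k"
proof -
  interpret finite_semigroup R p
    by (rule finite_semigroup.intro) fact
  show ?thesis
    using assms by (induction k) (auto simp: hom_def)
qed

lemma left_idem_compatible_of_fibre:
  assumes sR: "sgrp R p" and sA: "sgrp A m" and \<psi>: "hom R p A m \<psi>" "\<psi> ` R = A"
    and \<phi>: "hom R p B n \<phi>" "idem_injective R n \<phi>"
    and r: "r \<in> R" "r' \<in> R" "\<phi> r = \<phi> r'"
  shows "left_idem_compatible A m (\<psi> r) (\<psi> r')"
  unfolding left_idem_compatible_def
proof (intro ballI impI)
  interpret R: finite_semigroup R p
    by (rule finite_semigroup.intro) fact
  interpret A: finite_semigroup A m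
    by (rule finite_semigroup.intro) fact
  have \<psi>_mult: "\<And>x y. x \<in> R \<Longrightarrow> y \<in> R \<Longrightarrow> \<psi> (p x y) = m (\<psi> x) (\<psi> y)"
    and \<phi>_mult: "\<And>x y. x \<in> R \<Longrightarrow> y \<in> R \<Longrightarrow> \<phi> (p x y) = n (\<phi> x) (\<phi> y)"
    using \<psi>(1) \<phi>(1) unfolding hom_def by auto
  fix x
  assume x: "x \<in> A" and idem: "m (m x (\<psi> r)) (m x (\<psi> r)) = m x (\<psi> r)"
  obtain u where u: "u \<in> R" "\<psi> u = x"
    using \<psi>(2) x by auto
  define a where "a = p u r"
  have aR: "a \<in> R" and \<psi>a: "\<psi> a = m x (\<psi> r)"
    unfolding a_def using u r \<psi>_mult by auto
  obtain k where k: "p (spow p a k) (spow p a k) = spow p a k"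
    using R.idempotent_spow aR by metis
  define c where "c = p (spow p a (k + k)) u"
  have cR: "c \<in> R"
    unfolding c_def using aR u by auto
  have "p c r = spow p a (Suc (k + k))"
    unfolding c_def a_def using aR u r by (simp add: R.assoc a_def)
  also have "\<dots> = spow p a k"
    using R.spow_mult[OF aR, of k k] k by simp
  finally have cr: "p c r = spow p a k" .
  text \<open>\<open>c r\<close> is idempotent, so \<open>\<phi>\<close> identifies it with no other element, in particular \<open>c r' = c r\<close>.\<close>
  have "\<phi> (p c r) = \<phi> (p c r')"
    using \<phi>_mult cR r by simp
  moreover have "n (\<phi> (p c r)) (\<phi> (p c r)) = \<phi> (p c r)"
    using \<phi>_mult[of "p c r" "p c r"] cR r cr k aR by simp
  ultimately have "p c r' = spow p a k"
    using \<phi>(2) cR r cr unfolding idem_injective_def by (metis R.closed)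
  then have "m (\<psi> c) (\<psi> r') = m x (\<psi> r)"
    using \<psi>_mult[OF cR r(2)] hom_spow[OF \<psi>(1) sR aR] \<psi>a A.spow_idempotent[OF idem] by simp
  moreover have "\<psi> c = m (m x (\<psi> r)) x"
    unfolding c_def using \<psi>_mult aR u hom_spow[OF \<psi>(1) sR aR] \<psi>a A.spow_idempotent[OF idem]
    by simp
  ultimately show "m (m x (\<psi> r)) (m x (\<psi> r')) = m x (\<psi> r)"
    using x r \<psi>(1) unfolding hom_def by (simp add: A.assoc)
qed

lemma idem_compatible_of_fibre:
  assumes "sgrp R p" "sgrp A m" "hom R p A m \<psi>" "\<psi> ` R = A" "hom R p B n \<phi>" "idem_injective R n \<phi>"
    and "r \<in> R" "r' \<in> R" "\<phi> r = \<phi> r'"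
  shows "idem_compatible A m (\<psi> r) (\<psi> r')"
proof -
  have "idem_injective R (\<lambda>x y. n y x) \<phi>"
    using assms(6) unfolding idem_injective_def .
  then show ?thesis
    unfolding idem_compatible_def
    using left_idem_compatible_of_fibre[OF assms]
      left_idem_compatible_of_fibre[OF sgrp_dual sgrp_dual hom_dual _ hom_dual, OF assms(1-5)]
      assms(7-9) by blast
qed

lemma semisimple_type_factor_through_fibres:
  fixes A :: "nat set"
  assumes "sgrp R p" "sgrp A m" "semisimple_type A m" "hom R p A m \<psi>" "\<psi> ` R = A"
    and "hom R p B n \<phi>" "idem_injective R n \<phi>" and r: "r \<in> R" "r' \<in> R" "\<phi> r = \<phi> r'"
  shows "\<psi> r = \<psi> r'"
proof (rule semisimple_type_idem_compatible_eq[OF assms(2,3)])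
  show "\<psi> r \<in> A" "\<psi> r' \<in> A"
    using assms(4) r unfolding hom_def by auto
  show "idem_compatible A m (\<psi> r) (\<psi> r')" "idem_compatible A m (\<psi> r') (\<psi> r)"
    using idem_compatible_of_fibre[OF assms(1,2,4-7)] r by auto
qed

section \<open>Pseudovarieties\<close>

lemma pseudovariety_is_sg: "pseudovariety V \<Longrightarrow> S \<in> V \<Longrightarrow> is_sg S"
  and pseudovariety_prod: "pseudovariety V \<Longrightarrow> S \<in> V \<Longrightarrow> T \<in> V \<Longrightarrow> prod_sg S T \<in> V"
  and pseudovariety_subsemigroup:
    "pseudovariety V \<Longrightarrow> (A, m) \<in> V \<Longrightarrow> B \<subseteq> A \<Longrightarrow> sgrp B m \<Longrightarrow> (B, m) \<in> V"
  and pseudovariety_image: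
    "pseudovariety V \<Longrightarrow> (A, m) \<in> V \<Longrightarrow> sgrp B n \<Longrightarrow> hom A m B n h \<Longrightarrow> h ` A = B \<Longrightarrow> (B, n) \<in> V"
  unfolding pseudovariety_def by blast+

lemma sgrp_singleton: "n b b = b \<Longrightarrow> sgrp {b} n"
  unfolding sgrp_def by simp

lemma pseudovariety_card_1:
  assumes V: "pseudovariety V" and B: "sgrp B n" "card B = 1"
  shows "(B, n) \<in> V"
proof -
  obtain b where b: "B = {b}"
    using B(2) card_1_singletonE by blast
  obtain A m where Am: "(A, m) \<in> V"
    using V unfolding pseudovariety_def by fast
  then have "A \<noteq> {}"
    using pseudovariety_is_sg[OF V Am] unfolding is_sg_def sgrp_def by simp
  moreover have "n b b = b"
    using B(1) b unfolding sgrp_def by auto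
  ultimately have "hom A m B n (\<lambda>_. b)" "(\<lambda>_. b) ` A = B"
    unfolding hom_def b by auto
  then show ?thesis
    using pseudovariety_image[OF V Am B(1)] by blast
qed

definition trivial_sg :: sg where
  "trivial_sg = ({0}, \<lambda>_ _. 0)"

lemma is_sg_trivial_sg: "is_sg trivial_sg"
  unfolding trivial_sg_def is_sg_def by (simp add: sgrp_singleton)

lemma trivial_sg_in_pseudovariety: "pseudovariety V \<Longrightarrow> trivial_sg \<in> V"
  unfolding trivial_sg_def by (rule pseudovariety_card_1) (auto simp: sgrp_singleton)

lemma is_sg_prod_sg:
  assumes "is_sg (A, m)" "is_sg (B, n)"
  shows "is_sg (prod_sg (A, m) (B, n))"
proof -
  interpret A: finite_semigroup A m
    using assms(1) unfolding is_sg_def by unfold_locales simp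
  interpret B: finite_semigroup B n
    using assms(2) unfolding is_sg_def by unfold_locales simp
  have "A \<noteq> {}" "B \<noteq> {}"
    using assms unfolding is_sg_def sgrp_def by auto
  then show ?thesis
    unfolding is_sg_def prod_sg_def sgrp_def
    using A.finite B.finite by (auto simp: A.assoc B.assoc)
qed

lemma pseudovariety_all_sg: "pseudovariety {S. is_sg S}"
  unfolding pseudovariety_def
  using is_sg_trivial_sg is_sg_prod_sg by (auto simp: is_sg_def)

lemma pseudovariety_Inter:
  assumes "\<V> \<noteq> {}" "\<And>V. V \<in> \<V> \<Longrightarrow> pseudovariety V"
  shows "pseudovariety (\<Inter>\<V>)"
proof -
  have "trivial_sg \<in> \<Inter>\<V>" "\<And>S. S \<in> \<Inter>\<V> \<Longrightarrow> is_sg S"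
    using assms trivial_sg_in_pseudovariety pseudovariety_is_sg by blast+
  then show ?thesis
    unfolding pseudovariety_def
  proof (intro conjI allI impI ballI)
    fix S T
    assume "S \<in> \<Inter>\<V>" "T \<in> \<Inter>\<V>"
    then show "prod_sg S T \<in> \<Inter>\<V>"
      by (auto intro: pseudovariety_prod[OF assms(2)])
  next
    fix A B m
    assume "(A, m) \<in> \<Inter>\<V>" "B \<subseteq> A" "sgrp B m"
    then show "(B, m) \<in> \<Inter>\<V>"
      by (auto intro: pseudovariety_subsemigroup[OF assms(2)])
  next
    fix A B :: "nat set" and m n h
    assume "(A, m) \<in> \<Inter>\<V>" "sgrp B n" "hom A m B n h" "h ` A = B"
    then show "(B, n) \<in> \<Inter>\<V>"
      by (auto intro: pseudovariety_image[OF assms(2)])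
  qed blast+
qed

lemma pseudovariety_pv_gen: "C \<subseteq> {S. is_sg S} \<Longrightarrow> pseudovariety (pv_gen C)"
  unfolding pv_gen_def using pseudovariety_all_sg by (intro pseudovariety_Inter) auto

lemma pv_gen_subset: "C \<subseteq> pv_gen C"
  unfolding pv_gen_def by auto

lemma pv_gen_least: "pseudovariety V \<Longrightarrow> C \<subseteq> V \<Longrightarrow> pv_gen C \<subseteq> V"
  unfolding pv_gen_def by auto

lemma pseudovariety_pv_gen1: "is_sg T \<Longrightarrow> pseudovariety (pv_gen1 T)"
  unfolding pv_gen1_def by (rule pseudovariety_pv_gen) simp

lemma pv_gen1_in: "T \<in> pv_gen1 T"
  unfolding pv_gen1_def using pv_gen_subset by blast

lemma pv_gen1_least: "pseudovariety V \<Longrightarrow> T \<in> V \<Longrightarrow> pv_gen1 T \<subseteq> V"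
  unfolding pv_gen1_def by (rule pv_gen_least) simp_all

text \<open>A trivial \<open>S\<close> would lie in the empty join.\<close>

lemma join_irreducible_nontrivial:
  assumes "is_sg S" "join_irreducible (pv_gen1 S)"
  shows "card (fst S) \<noteq> 1"
proof
  assume "card (fst S) = 1"
  moreover have "pseudovariety (pv_join {})"
    unfolding pv_join_def by (rule pseudovariety_pv_gen) simp
  ultimately have "S \<in> pv_join {}"
    using pseudovariety_card_1[of _ "fst S" "snd S"] assms(1) unfolding is_sg_def by simp
  then have "pv_gen1 S \<subseteq> pv_join {}"
    using pv_gen1_least \<open>pseudovariety (pv_join {})\<close> by blast
  then show False
    using assms(2) unfolding join_irreducible_def by blast
qed

lemma pseudovariety_triv_pv: "pseudovariety triv_pv"
  unfolding pseudovariety_def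
proof (intro conjI allI impI ballI)
  show "triv_pv \<noteq> {}"
    using is_sg_trivial_sg unfolding triv_pv_def trivial_sg_def by auto
next
  fix S T
  assume "S \<in> triv_pv" "T \<in> triv_pv"
  moreover obtain A m B n where "S = (A, m)" "T = (B, n)"
    by fastforce
  ultimately show "prod_sg S T \<in> triv_pv"
    using is_sg_prod_sg unfolding triv_pv_def prod_sg_def by (auto simp: card_1_singleton_iff)
next
  fix A B :: "nat set" and m
  assume "(A, m) \<in> triv_pv" "B \<subseteq> A" "sgrp B m"
  moreover have "B \<noteq> {}"
    using \<open>sgrp B m\<close> unfolding sgrp_def by simp
  ultimately show "(B, m) \<in> triv_pv"
    unfolding triv_pv_def is_sg_def by (auto simp: card_1_singleton_iff subset_singleton_iff)
next
  fix A B :: "nat set" and m n h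
  assume "(A, m) \<in> triv_pv" "sgrp B n" "h ` A = B"
  then show "(B, n) \<in> triv_pv"
    unfolding triv_pv_def is_sg_def by (auto simp: card_1_singleton_iff)
qed (simp add: triv_pv_def)

lemma Excl_pv_gen1_closed:
  assumes T: "T \<in> Excl S" and T': "T' \<in> pv_gen1 T"
  shows "T' \<in> Excl S"
proof -
  have V: "pseudovariety (pv_gen1 T)"
    using T unfolding Excl_def by (simp add: pseudovariety_pv_gen1)
  then have "pv_gen1 T' \<subseteq> pv_gen1 T"
    using T' by (rule pv_gen1_least)
  moreover have "is_sg T'"
    using pseudovariety_is_sg[OF V T'] .
  ultimately show ?thesis
    using T unfolding Excl_def by auto
qed

lemma Excl_prod_sg:
  assumes ji: "join_irreducible (pv_gen1 S)" and T: "T1 \<in> Excl S" "T2 \<in> Excl S"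
  shows "prod_sg T1 T2 \<in> Excl S"
proof (rule ccontr)
  define \<X> where "\<X> = {pv_gen1 T1, pv_gen1 T2}"
  have sg: "is_sg T1" "is_sg T2"
    using T unfolding Excl_def by auto
  then have pv: "\<forall>X\<in>\<X>. pseudovariety X"
    unfolding \<X>_def using pseudovariety_pv_gen1 by auto
  have J: "pseudovariety (pv_join \<X>)"
    unfolding pv_join_def
    by (rule pseudovariety_pv_gen) (use pv pseudovariety_is_sg in blast)
  have "T1 \<in> \<Union>\<X>" "T2 \<in> \<Union>\<X>"
    unfolding \<X>_def using pv_gen1_in by blast+
  then have "T1 \<in> pv_join \<X>" "T2 \<in> pv_join \<X>"
    unfolding pv_join_def using pv_gen_subset by blast+
  then have "prod_sg T1 T2 \<in> pv_join \<X>"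
    by (rule pseudovariety_prod[OF J])
  assume "prod_sg T1 T2 \<notin> Excl S"
  moreover have "is_sg (prod_sg T1 T2)"
    using sg is_sg_prod_sg[of "fst T1" "snd T1" "fst T2" "snd T2"] by simp
  ultimately have "S \<in> pv_gen1 (prod_sg T1 T2)"
    unfolding Excl_def by simp
  then have "pv_gen1 S \<subseteq> pv_join \<X>"
    using pv_gen1_least[OF J] \<open>prod_sg T1 T2 \<in> pv_join \<X>\<close> by blast
  then obtain X where "X \<in> \<X>" "pv_gen1 S \<subseteq> X"
    using ji pv unfolding join_irreducible_def by blast
  then have "X \<in> \<X>" "S \<in> X"
    using pv_gen1_in by blast+
  then show False
    using T unfolding \<X>_def Excl_def by auto
qed

lemma pseudovariety_Excl:
  assumes S: "is_sg S" and ji: "join_irreducible (pv_gen1 S)"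
  shows "pseudovariety (Excl S)"
  unfolding pseudovariety_def
proof (intro conjI allI impI ballI)
  have "pv_gen1 trivial_sg \<subseteq> triv_pv"
    by (intro pv_gen1_least pseudovariety_triv_pv trivial_sg_in_pseudovariety)
  moreover have "S \<notin> triv_pv"
    using join_irreducible_nontrivial[OF S ji] unfolding triv_pv_def by auto
  ultimately have "trivial_sg \<in> Excl S"
    using is_sg_trivial_sg unfolding Excl_def by auto
  then show "Excl S \<noteq> {}"
    by auto
next
  fix A B :: "nat set" and m
  assume T: "(A, m) \<in> Excl S" "B \<subseteq> A" "sgrp B m"
  then have "pseudovariety (pv_gen1 (A, m))"
    unfolding Excl_def by (simp add: pseudovariety_pv_gen1)
  then have "(B, m) \<in> pv_gen1 (A, m)"
    using pv_gen1_in T(2,3) by (rule pseudovariety_subsemigroup)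
  with T(1) show "(B, m) \<in> Excl S"
    by (rule Excl_pv_gen1_closed)
next
  fix A B :: "nat set" and m n h
  assume T: "(A, m) \<in> Excl S" "sgrp B n" "hom A m B n h" "h ` A = B"
  then have "pseudovariety (pv_gen1 (A, m))"
    unfolding Excl_def by (simp add: pseudovariety_pv_gen1)
  then have "(B, n) \<in> pv_gen1 (A, m)"
    using pv_gen1_in T(2-4) by (rule pseudovariety_image)
  with T(1) show "(B, n) \<in> Excl S"
    by (rule Excl_pv_gen1_closed)
qed (use Excl_prod_sg[OF ji] in \<open>simp_all add: Excl_def\<close>)

section \<open>Mal'cev products with the trivial pseudovariety\<close>

definition prod_map :: "(nat \<Rightarrow> nat) \<Rightarrow> (nat \<Rightarrow> nat) \<Rightarrow> nat \<Rightarrow> nat" where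
  "prod_map h1 h2 x = prod_encode (h1 (fst (prod_decode x)), h2 (snd (prod_decode x)))"

lemma hom_prod_map:
  assumes "hom A1 m1 B1 n1 h1" "hom A2 m2 B2 n2 h2"
  shows "hom (fst (prod_sg (A1, m1) (A2, m2))) (snd (prod_sg (A1, m1) (A2, m2)))
    (fst (prod_sg (B1, n1) (B2, n2))) (snd (prod_sg (B1, n1) (B2, n2))) (prod_map h1 h2)"
  using assms unfolding hom_def prod_sg_def prod_map_def by auto

lemma image_prod_map:
  assumes "h1 ` A1 = B1" "h2 ` A2 = B2"
  shows "prod_map h1 h2 ` fst (prod_sg (A1, m1) (A2, m2)) = fst (prod_sg (B1, n1) (B2, n2))"
proof -
  have "prod_map h1 h2 ` prod_encode ` (A1 \<times> A2) = prod_encode ` ((\<lambda>(a, b). (h1 a, h2 b)) ` (A1 \<times> A2))"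
    unfolding prod_map_def image_image by (intro image_cong) auto
  also have "(\<lambda>(a, b). (h1 a, h2 b)) ` (A1 \<times> A2) = B1 \<times> B2"
    using assms by (simp add: image_paired_Times)
  finally show ?thesis
    unfolding prod_sg_def by simp
qed

lemma idem_injective_prod_map:
  assumes "idem_injective R1 n1 \<phi>1" "idem_injective R2 n2 \<phi>2"
  shows "idem_injective (fst (prod_sg (R1, p1) (R2, p2))) (snd (prod_sg (B1, n1) (B2, n2)))
    (prod_map \<phi>1 \<phi>2)"
  unfolding idem_injective_def
proof (intro ballI impI)
  fix x y
  assume "x \<in> fst (prod_sg (R1, p1) (R2, p2))" "y \<in> fst (prod_sg (R1, p1) (R2, p2))"
  then obtain a b c d where ab: "a \<in> R1" "b \<in> R2" "x = prod_encode (a, b)"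
    and cd: "c \<in> R1" "d \<in> R2" "y = prod_encode (c, d)"
    unfolding prod_sg_def by auto
  assume "prod_map \<phi>1 \<phi>2 x = prod_map \<phi>1 \<phi>2 y"
    and "snd (prod_sg (B1, n1) (B2, n2)) (prod_map \<phi>1 \<phi>2 x) (prod_map \<phi>1 \<phi>2 x) = prod_map \<phi>1 \<phi>2 x"
  then have "\<phi>1 a = \<phi>1 c" "\<phi>2 b = \<phi>2 d" "n1 (\<phi>1 a) (\<phi>1 a) = \<phi>1 a" "n2 (\<phi>2 b) (\<phi>2 b) = \<phi>2 b"
    unfolding ab cd prod_map_def prod_sg_def by simp_all
  then have "a = c" "b = d"
    using assms ab cd unfolding idem_injective_def by blast+
  then show "x = y"
    using ab cd by simp
qed

text \<open>This pseudovariety contains the generators of \<open>malcev triv_pv W\<close>.\<close>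

definition idem_injective_quotients :: "sg set \<Rightarrow> sg set" where
  "idem_injective_quotients W = {(A, m). sgrp A m \<and>
     (\<exists>(R :: nat set) p \<psi> B n \<phi>. sgrp R p \<and> hom R p A m \<psi> \<and> \<psi> ` R = A \<and>
        (B, n) \<in> W \<and> hom R p B n \<phi> \<and> idem_injective R n \<phi>)}"

lemma idem_injective_quotientsI:
  fixes R :: "nat set"
  assumes "sgrp A m" "sgrp R p" "hom R p A m \<psi>" "\<psi> ` R = A" "(B, n) \<in> W" "hom R p B n \<phi>"
    "idem_injective R n \<phi>"
  shows "(A, m) \<in> idem_injective_quotients W"
  unfolding idem_injective_quotients_def using assms by blast

lemma idem_injective_quotientsE:
  assumes "(A, m) \<in> idem_injective_quotients W"
  obtains R :: "nat set" and p \<psi> B n \<phi> where "sgrp A m" "sgrp R p" "hom R p A m \<psi>" "\<psi> ` R = A"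
    "(B, n) \<in> W" "hom R p B n \<phi>" "idem_injective R n \<phi>"
  using assms unfolding idem_injective_quotients_def by blast

lemma prod_sg_in_idem_injective_quotients:
  assumes W: "pseudovariety W"
    and X12: "X1 \<in> idem_injective_quotients W" "X2 \<in> idem_injective_quotients W"
  shows "prod_sg X1 X2 \<in> idem_injective_quotients W"
proof -
  obtain A1 q1 A2 q2 where X: "X1 = (A1, q1)" "X2 = (A2, q2)"
    by fastforce
  obtain R1 :: "nat set" and p1 \<psi>1 B1 n1 \<phi>1 where G1: "sgrp A1 q1" "sgrp R1 p1" "hom R1 p1 A1 q1 \<psi>1"
    "\<psi>1 ` R1 = A1" "(B1, n1) \<in> W" "hom R1 p1 B1 n1 \<phi>1" "idem_injective R1 n1 \<phi>1"
    using X12(1) unfolding X(1) by (rule idem_injective_quotientsE)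
  obtain R2 :: "nat set" and p2 \<psi>2 B2 n2 \<phi>2 where G2: "sgrp A2 q2" "sgrp R2 p2" "hom R2 p2 A2 q2 \<psi>2"
    "\<psi>2 ` R2 = A2" "(B2, n2) \<in> W" "hom R2 p2 B2 n2 \<phi>2" "idem_injective R2 n2 \<phi>2"
    using X12(2) unfolding X(2) by (rule idem_injective_quotientsE)
  let ?A = "prod_sg (A1, q1) (A2, q2)" and ?R = "prod_sg (R1, p1) (R2, p2)"
    and ?B = "prod_sg (B1, n1) (B2, n2)"
  have "sgrp (fst ?A) (snd ?A)" "sgrp (fst ?R) (snd ?R)"
    using G1(1,2) G2(1,2) is_sg_prod_sg unfolding is_sg_def by simp_all
  moreover have "(fst ?B, snd ?B) \<in> W"
    using pseudovariety_prod[OF W G1(5) G2(5)] by simp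
  ultimately have "(fst ?A, snd ?A) \<in> idem_injective_quotients W"
    using hom_prod_map[OF G1(3) G2(3)] image_prod_map[OF G1(4) G2(4)]
      hom_prod_map[OF G1(6) G2(6)] idem_injective_prod_map[OF G1(7) G2(7)]
    by (intro idem_injective_quotientsI) blast+
  then show ?thesis
    unfolding X by simp
qed

lemma subsemigroup_in_idem_injective_quotients:
  fixes A B :: "nat set"
  assumes A: "(A, q) \<in> idem_injective_quotients W" and B: "B \<subseteq> A" "sgrp B q"
  shows "(B, q) \<in> idem_injective_quotients W"
proof -
  obtain R :: "nat set" and p \<psi> C n \<phi> where G: "sgrp R p" "hom R p A q \<psi>" "\<psi> ` R = A"
    "(C, n) \<in> W" "hom R p C n \<phi>" "idem_injective R n \<phi>"
    using A by (rule idem_injective_quotientsE)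
  define R' where "R' = {r \<in> R. \<psi> r \<in> B}"
  have "B \<noteq> {}"
    using B(2) unfolding sgrp_def by simp
  then have "R' \<noteq> {}"
    using G(3) B(1) unfolding R'_def by blast
  then have "sgrp R' p"
    using G(1,2) B(2) unfolding R'_def sgrp_def hom_def by auto
  moreover have "hom R' p B q \<psi>" "\<psi> ` R' = B" "hom R' p C n \<phi>" "idem_injective R' n \<phi>"
    using G B(1) unfolding R'_def hom_def idem_injective_def by auto
  ultimately show ?thesis
    using B(2) G(4) by (intro idem_injective_quotientsI)
qed

lemma pseudovariety_idem_injective_quotients:
  assumes W: "pseudovariety W"
  shows "pseudovariety (idem_injective_quotients W)"
  unfolding pseudovariety_def
proof (intro conjI allI impI ballI)
  obtain B n where Bn: "(B, n) \<in> W"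
    using W unfolding pseudovariety_def by fast
  then have "sgrp B n"
    using pseudovariety_is_sg[OF W] unfolding is_sg_def by fastforce
  moreover have "hom B n B n id" "idem_injective B n id"
    using \<open>sgrp B n\<close> unfolding hom_def idem_injective_def sgrp_def by auto
  ultimately have "(B, n) \<in> idem_injective_quotients W"
    using Bn idem_injective_quotientsI[of B n B n id] by simp
  then show "idem_injective_quotients W \<noteq> {}"
    by blast
next
  fix X
  assume "X \<in> idem_injective_quotients W"
  then show "is_sg X"
    unfolding idem_injective_quotients_def is_sg_def by auto
next
  fix A B :: "nat set" and q n' h
  assume A: "(A, q) \<in> idem_injective_quotients W" and h: "sgrp B n'" "hom A q B n' h" "h ` A = B"
  obtain R :: "nat set" and p \<psi> C n \<phi> where G: "sgrp R p" "hom R p A q \<psi>" "\<psi> ` R = A"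
    "(C, n) \<in> W" "hom R p C n \<phi>" "idem_injective R n \<phi>"
    using A by (rule idem_injective_quotientsE)
  have "hom R p B n' (h \<circ> \<psi>)" "(h \<circ> \<psi>) ` R = B"
    using G(2,3) h(2,3) unfolding hom_def by (auto simp: image_comp[symmetric])
  then show "(B, n') \<in> idem_injective_quotients W"
    using G h(1) by (intro idem_injective_quotientsI)
qed (use prod_sg_in_idem_injective_quotients[OF W] subsemigroup_in_idem_injective_quotients in blast)+

lemma sgrp_hom_image:
  assumes "sgrp R p" "sgrp B n" "hom R p B n \<phi>"
  shows "sgrp (\<phi> ` R) n"
  unfolding sgrp_def
proof (intro conjI ballI)
  show "finite (\<phi> ` R)" "\<phi> ` R \<noteq> {}"
    using assms(1) unfolding sgrp_def by simp_all
next
  fix x y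
  assume "x \<in> \<phi> ` R" "y \<in> \<phi> ` R"
  then obtain a b where "a \<in> R" "b \<in> R" "x = \<phi> a" "y = \<phi> b"
    by blast
  then have "n x y = \<phi> (p a b)" "p a b \<in> R"
    using assms(1,3) unfolding hom_def sgrp_def by simp_all
  then show "n x y \<in> \<phi> ` R"
    by blast
next
  fix x y z
  assume "x \<in> \<phi> ` R" "y \<in> \<phi> ` R" "z \<in> \<phi> ` R"
  moreover have "\<phi> ` R \<subseteq> B"
    using assms(3) unfolding hom_def by auto
  ultimately show "n (n x y) z = n x (n y z)"
    using assms(2) unfolding sgrp_def by blast
qed

lemma hom_factor_through_image:
  assumes R: "sgrp R p" and \<psi>: "hom R p A m \<psi>" "\<psi> ` R = A" and \<phi>: "hom R p B n \<phi>"
    and factor: "\<And>r r'. r \<in> R \<Longrightarrow> r' \<in> R \<Longrightarrow> \<phi> r = \<phi> r' \<Longrightarrow> \<psi> r = \<psi> r'"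
  obtains h where "hom (\<phi> ` R) n A m h" "h ` \<phi> ` R = A"
proof
  define h where "h y = \<psi> (SOME r. r \<in> R \<and> \<phi> r = y)" for y
  have h\<phi>: "h (\<phi> r) = \<psi> r" if "r \<in> R" for r
  proof -
    have "(SOME r'. r' \<in> R \<and> \<phi> r' = \<phi> r) \<in> R \<and> \<phi> (SOME r'. r' \<in> R \<and> \<phi> r' = \<phi> r) = \<phi> r"
      using someI[of "\<lambda>r'. r' \<in> R \<and> \<phi> r' = \<phi> r" r] that by blast
    then show ?thesis
      unfolding h_def using factor that by blast
  qed
  have "h ` \<phi> ` R = \<psi> ` R"
    unfolding image_image by (rule image_cong) (simp_all add: h\<phi>)
  then show "h ` \<phi> ` R = A"
    using \<psi>(2) by simp
  moreover have "h (n x y) = m (h x) (h y)" if xy: "x \<in> \<phi> ` R" "y \<in> \<phi> ` R" for x y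
  proof -
    obtain a b where ab: "a \<in> R" "b \<in> R" "x = \<phi> a" "y = \<phi> b"
      using xy by blast
    then have "h (n x y) = h (\<phi> (p a b))"
      using \<phi> unfolding hom_def by simp
    also have "\<dots> = m (h x) (h y)"
      using ab h\<phi> R \<psi>(1) unfolding hom_def sgrp_def by simp
    finally show ?thesis .
  qed
  ultimately show "hom (\<phi> ` R) n A m h"
    unfolding hom_def by blast
qed

lemma semisimple_type_mem_of_idem_injective_quotient:
  fixes A :: "nat set"
  assumes W: "pseudovariety W" and sA: "sgrp A m" and sst: "semisimple_type A m"
    and A: "(A, m) \<in> idem_injective_quotients W"
  shows "(A, m) \<in> W"
proof -
  obtain R :: "nat set" and p \<psi> B n \<phi> where G: "sgrp R p" "hom R p A m \<psi>" "\<psi> ` R = A"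
    "(B, n) \<in> W" "hom R p B n \<phi>" "idem_injective R n \<phi>"
    using A by (rule idem_injective_quotientsE)
  obtain h where h: "hom (\<phi> ` R) n A m h" "h ` \<phi> ` R = A"
    using hom_factor_through_image[OF G(1-3,5)]
      semisimple_type_factor_through_fibres[OF G(1) sA sst G(2,3,5,6)] by blast
  have sB: "sgrp B n"
    using pseudovariety_is_sg[OF W G(4)] unfolding is_sg_def by simp
  have "\<phi> ` R \<subseteq> B"
    using G(5) unfolding hom_def by auto
  then have "(\<phi> ` R, n) \<in> W"
    using pseudovariety_subsemigroup[OF W G(4)] sgrp_hom_image[OF G(1) sB G(5)] by blast
  then show ?thesis
    using pseudovariety_image[OF W _ sA h] by blast
qed

lemma idem_injective_quotients_Excl_subset:
  fixes A :: "nat set"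
  assumes sA: "sgrp A m" and ji: "join_irreducible (pv_gen1 (A, m))" and sst: "semisimple_type A m"
  shows "idem_injective_quotients (Excl (A, m)) \<subseteq> Excl (A, m)"
proof
  fix X
  assume X: "X \<in> idem_injective_quotients (Excl (A, m))"
  have E: "pseudovariety (Excl (A, m))"
    using sA ji by (intro pseudovariety_Excl) (simp add: is_sg_def)
  then have Q: "pseudovariety (idem_injective_quotients (Excl (A, m)))"
    by (rule pseudovariety_idem_injective_quotients)
  have "(A, m) \<notin> idem_injective_quotients (Excl (A, m))"
    using semisimple_type_mem_of_idem_injective_quotient[OF E sA sst] pv_gen1_in
    unfolding Excl_def by blast
  moreover have "pv_gen1 X \<subseteq> idem_injective_quotients (Excl (A, m))"
    using pv_gen1_least[OF Q X] .
  ultimately show "X \<in> Excl (A, m)"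
    using pseudovariety_is_sg[OF Q X] unfolding Excl_def by blast
qed

lemma malcev_triv_pv_subset:
  assumes "pseudovariety W"
  shows "malcev triv_pv W \<subseteq> idem_injective_quotients W"
  unfolding malcev_def
proof (rule pv_gen_least[OF pseudovariety_idem_injective_quotients[OF assms]], safe)
  fix A :: "nat set" and m B n \<phi>
  assume sA: "sgrp A m" and B: "(B, n) \<in> W" "hom A m B n \<phi>"
    and fibres: "\<forall>e\<in>B. n e e = e \<longrightarrow> {s \<in> A. \<phi> s = e} \<noteq> {} \<longrightarrow> ({s \<in> A. \<phi> s = e}, m) \<in> triv_pv"
  have "idem_injective A n \<phi>"
    unfolding idem_injective_def
  proof (intro ballI impI)
    fix x y
    assume xy: "x \<in> A" "y \<in> A" "\<phi> x = \<phi> y" "n (\<phi> x) (\<phi> x) = \<phi> x"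
    then have "\<phi> x \<in> B"
      using B(2) unfolding hom_def by auto
    then have "card {s \<in> A. \<phi> s = \<phi> x} = 1"
      using fibres xy unfolding triv_pv_def by auto
    moreover have "x \<in> {s \<in> A. \<phi> s = \<phi> x}" "y \<in> {s \<in> A. \<phi> s = \<phi> x}"
      using xy by auto
    ultimately show "x = y"
      by (metis card_1_singletonE singletonD)
  qed
  moreover have "hom A m A m id"
    using sA unfolding hom_def sgrp_def by simp
  ultimately show "(A, m) \<in> idem_injective_quotients W"
    using sA B idem_injective_quotientsI[of A m A m id] by simp
qed

lemma subset_malcev_triv_pv:
  assumes "W \<subseteq> {S. is_sg S}"
  shows "W \<subseteq> malcev triv_pv W"
  unfolding malcev_def
proof (rule subset_trans[OF _ pv_gen_subset], safe)
  fix A :: "nat set" and m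
  assume "(A, m) \<in> W"
  then show "sgrp A m"
    using assms unfolding is_sg_def by auto
next
  fix A :: "nat set" and m
  assume A: "(A, m) \<in> W"
  then have sA: "sgrp A m"
    using assms unfolding is_sg_def by auto
  moreover have "hom A m A m id"
    using sA unfolding hom_def sgrp_def by simp
  moreover have "({s \<in> A. id s = e}, m) \<in> triv_pv" if "e \<in> A" "m e e = e" for e
  proof -
    have "{s \<in> A. id s = e} = {e}"
      using that by auto
    then show ?thesis
      unfolding triv_pv_def is_sg_def using sgrp_singleton that(2) by simp
  qed
  ultimately show "\<exists>B n \<phi>. (B, n) \<in> W \<and> hom A m B n \<phi> \<and>
    (\<forall>e\<in>B. n e e = e \<longrightarrow> {s \<in> A. \<phi> s = e} \<noteq> {} \<longrightarrow> ({s \<in> A. \<phi> s = e}, m) \<in> triv_pv)"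
    using A by blast
qed

theorem theorem4p2:
  fixes A :: "nat set" and m :: "nat \<Rightarrow> nat \<Rightarrow> nat"
  assumes "sgrp A m"
    and "subdirectly_indecomposable A m"
    and "join_irreducible (pv_gen1 (A, m))"
    and "semisimple_type A m"
  shows "malcev triv_pv (Excl (A, m)) = Excl (A, m)"
proof
  have "pseudovariety (Excl (A, m))"
    using assms(1,3) by (intro pseudovariety_Excl) (simp add: is_sg_def)
  then show "malcev triv_pv (Excl (A, m)) \<subseteq> Excl (A, m)"
    using malcev_triv_pv_subset idem_injective_quotients_Excl_subset[OF assms(1,3,4)] by blast
  show "Excl (A, m) \<subseteq> malcev triv_pv (Excl (A, m))"
    by (rule subset_malcev_triv_pv) (auto simp: Excl_def)
qed

end
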